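(* Let $G$ be a graph and $u$ a vertex of $G$ satisfying the NC property in $G$. Let $G'$ be the graph obtained from $G$ by locally chordalizing all holes in $\mathcal H(G,u)$ by $u$. Then every hole of $G'$ is a hole of $G$ (no new hole is created).
   Context: All graphs are finite and simple. A hole of $G$ is an induced cycle of length at least $4$. $\mathcal H(G)$ is the set of holes of $G$ and $\mathcal H(G,u)$ the set of holes containing $u$. A vertex $u$ satisfies the NC property in $G$ if there are no holes $H\in\mathcal H(G,u)$ and $H'\in\mathcal H(G)\setminus\mathcal H(G,u)$ sharing two consecutive edges, i.e. two distinct edges with a common end vertex that both lie on $H$ and on $H'$. Locally chordalizing all holes in $\mathcal H(G,u)$ by $u$ produces the graph $G'$ with $V(G')=V(G)$ and $E(G')=E(G)\cup\{uw: w\neq u,\ w\in V(H)\text{ for some }H\in\mathcal H(G,u)\}$. *)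

theory Defs
  imports Main
begin

definition graph :: "'a set \<Rightarrow> 'a set set \<Rightarrow> bool" where
  "graph V E \<longleftrightarrow> finite V \<and> (\<forall>e\<in>E. \<exists>x y. x \<noteq> y \<and> x \<in> V \<and> y \<in> V \<and> e = {x, y})"

definition is_hole :: "'a set \<Rightarrow> 'a set set \<Rightarrow> 'a set \<Rightarrow> bool" where
  "is_hole V E C \<longleftrightarrow> C \<subseteq> V \<and>
     (\<exists>xs. distinct xs \<and> set xs = C \<and> length xs \<ge> 4 \<and>
        (\<forall>i<length xs. \<forall>j<length xs.
           ({xs ! i, xs ! j} \<in> E \<longleftrightarrow>
              (j = Suc i mod length xs \<or> i = Suc j mod length xs))))"

definition holes :: "'a set \<Rightarrow> 'a set set \<Rightarrow> 'a set set" where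
  "holes V E = {C. is_hole V E C}"

definition holes_at :: "'a set \<Rightarrow> 'a set set \<Rightarrow> 'a \<Rightarrow> 'a set set" where
  "holes_at V E u = {H \<in> holes V E. u \<in> H}"

text \<open>Edges lying on a hole (for an induced cycle: the edges of G inside its vertex set).\<close>
definition hole_edges :: "'a set set \<Rightarrow> 'a set \<Rightarrow> 'a set set" where
  "hole_edges E H = {e \<in> E. e \<subseteq> H}"

definition NC_property :: "'a set \<Rightarrow> 'a set set \<Rightarrow> 'a \<Rightarrow> bool" where
  "NC_property V E u \<longleftrightarrow>
     \<not> (\<exists>H \<in> holes_at V E u. \<exists>H' \<in> holes V E - holes_at V E u.
          \<exists>a b c. a \<noteq> c \<and>
            {a, b} \<in> hole_edges E H \<and> {a, b} \<in> hole_edges E H' \<and>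
            {b, c} \<in> hole_edges E H \<and> {b, c} \<in> hole_edges E H')"

definition local_chordalize :: "'a set \<Rightarrow> 'a set set \<Rightarrow> 'a \<Rightarrow> 'a set set" where
  "local_chordalize V E u =
     E \<union> {{u, w} | w. w \<noteq> u \<and> (\<exists>H \<in> holes_at V E u. w \<in> H)}"

end

theory Submission
  imports Defs
begin

text \<open>
  The graphs G and G' agree away from u, so a hole of G' avoiding u is a hole of G. A hole of
  G' through u is u followed by an induced path rs of G whose interior consists of vertices that
  are neither adjacent to u nor on a hole of G through u; it remains to see that both ends of rs
  are neighbours of u in G. Suppose an end a is not. Then a lies on a hole u, P, a, S of G, and
  the interior of rs leads from a to the other end b. Continuing from b to the first vertex that
  lies on this hole or is adjacent to u, and completing with a segment of the hole, one obtains a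
  walk between two neighbours of u whose shortcut is a hole through u containing an interior
  vertex of rs, a contradiction. The NC property is what makes the continuation attach to only one
  side of a: a walk attached to both P and S closes, together with the part of the hole between the
  attachments, a hole avoiding u that shares with u, P, a, S the two edges at a.
\<close>

section \<open>Walks and induced paths\<close>

abbreviation walk :: "'a set set \<Rightarrow> 'a list \<Rightarrow> bool" where
  "walk E \<equiv> successively (\<lambda>x y. {x, y} \<in> E)"

fun induced_path :: "'a set set \<Rightarrow> 'a list \<Rightarrow> bool" where
  "induced_path E [] \<longleftrightarrow> True"
| "induced_path E (x # xs) \<longleftrightarrow>
     induced_path E xs \<and> x \<notin> set xs \<and> (\<forall>y\<in>set xs. {x, y} \<in> E \<longleftrightarrow> y = hd xs)"

definition anticomplete :: "'a set set \<Rightarrow> 'a set \<Rightarrow> 'a set \<Rightarrow> bool" where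
  "anticomplete E A B \<longleftrightarrow> (\<forall>x\<in>A. \<forall>y\<in>B. {x, y} \<notin> E)"

lemma anticomplete_commute: "anticomplete E A B \<longleftrightarrow> anticomplete E B A"
  unfolding anticomplete_def by (metis insert_commute)

lemma graph_edge_vertices: "graph V E \<Longrightarrow> {x, y} \<in> E \<Longrightarrow> x \<in> V \<and> y \<in> V"
  unfolding graph_def by (fastforce simp: doubleton_eq_iff)

lemma graph_loopless: "graph V E \<Longrightarrow> \<forall>x. {x, x} \<notin> E"
  unfolding graph_def by (auto simp: doubleton_eq_iff)

lemma walk_rev [simp]: "walk E (rev xs) \<longleftrightarrow> walk E xs"
proof -
  have "(\<lambda>x y. {y, x} \<in> E) = (\<lambda>x y. {x, y} \<in> E)" by (intro ext) (simp add: insert_commute)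
  then show ?thesis by (simp only: successively_rev)
qed

lemma walk_in_vertices:
  assumes g: "graph V E" and w: "walk E xs" and len: "2 \<le> length xs"
  shows "set xs \<subseteq> V"
proof
  fix x assume "x \<in> set xs"
  then obtain i where i: "i < length xs" "xs ! i = x" by (auto simp: in_set_conv_nth)
  show "x \<in> V"
  proof (cases "Suc i < length xs")
    case True
    then show ?thesis using successively_nth[OF w True] i graph_edge_vertices[OF g] by blast
  next
    case False
    with i len have "Suc (i - 1) < length xs" "Suc (i - 1) = i" by auto
    then show ?thesis using successively_nth[OF w, of "i - 1"] i graph_edge_vertices[OF g] by metis
  qed
qed

lemma walk_append_Cons: "walk E (xs @ [x]) \<Longrightarrow> walk E (x # ys) \<Longrightarrow> walk E (xs @ x # ys)"
  by (auto simp: successively_append_iff)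

lemma walk_between:
  assumes "walk E ys" "x \<in> set ys" "y \<in> set ys"
  shows "\<exists>w. walk E w \<and> w \<noteq> [] \<and> hd w = x \<and> last w = y \<and> set w \<subseteq> set ys"
proof -
  have forward: "\<exists>w. walk E w \<and> w \<noteq> [] \<and> hd w = x \<and> last w = y \<and> set w \<subseteq> set zs"
    if zs: "walk E zs" "zs = p @ x # q" and y: "y \<in> set (x # q)" for zs p q
  proof -
    from y obtain r t where r: "x # q = r @ y # t" by (metis split_list)
    have "walk E (x # q)" using zs by (simp add: successively_append_iff)
    then have "walk E ((r @ [y]) @ t)" unfolding r by simp
    then have "walk E (r @ [y])" using successively_append_iff by blast
    moreover have "hd (r @ [y]) = x" using r by (cases r) auto
    moreover have "set (r @ [y]) \<subseteq> set zs" using zs(2) r by auto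
    ultimately show ?thesis by (intro exI[of _ "r @ [y]"]) simp
  qed
  obtain p q where ys: "ys = p @ x # q" using assms(2) by (metis split_list)
  have "y \<in> set (x # q) \<or> y \<in> set (x # rev p)" using assms(3) ys by auto
  then show ?thesis
  proof
    assume "y \<in> set (x # q)"
    then show ?thesis using forward assms(1) ys by blast
  next
    assume "y \<in> set (x # rev p)"
    moreover have "rev ys = rev q @ x # rev p" using ys by simp
    moreover have "walk E (rev ys)" using assms(1) by (simp only: walk_rev)
    ultimately show ?thesis using forward[of "rev ys" "rev q" "rev p"] by (simp add: ys Un_commute)
  qed
qed

lemma induced_path_append:
  "induced_path E (xs @ ys) \<longleftrightarrow>
     induced_path E xs \<and> induced_path E ys \<and> set xs \<inter> set ys = {} \<and>
     (\<forall>x\<in>set xs. \<forall>y\<in>set ys. {x, y} \<in> E \<longleftrightarrow> x = last xs \<and> y = hd ys)"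
proof (induction xs)
  case (Cons x xs)
  show ?case
  proof (cases "xs = []")
    case False
    then have "hd xs \<in> set xs" "last xs \<in> set xs" by simp_all
    moreover have "x \<noteq> last xs \<and> y \<noteq> hd xs"
      if "x \<notin> set xs" "y \<in> set ys" "set xs \<inter> set ys = {}" for y
      using that \<open>last xs \<in> set xs\<close> \<open>hd xs \<in> set xs\<close> by blast
    ultimately show ?thesis using False Cons.IH by (auto simp: ball_Un)
  qed auto
qed simp

lemma induced_path_rev [simp]: "induced_path E (rev xs) \<longleftrightarrow> induced_path E xs"
  by (induction xs) (auto simp: induced_path_append last_rev insert_commute)

lemma induced_path_distinct: "induced_path E xs \<Longrightarrow> distinct xs"
  by (induction xs) auto

lemma induced_path_walk: "induced_path E xs \<Longrightarrow> walk E xs"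
proof (induction xs)
  case (Cons x xs)
  then show ?case by (cases xs) auto
qed simp

lemma induced_path_anticomplete:
  "induced_path E (xs @ ys @ zs) \<Longrightarrow> ys \<noteq> [] \<Longrightarrow> anticomplete E (set xs) (set zs)"
  by (auto simp: induced_path_append anticomplete_def disjoint_iff)

lemma induced_path_length:
  "induced_path E xs \<Longrightarrow> xs \<noteq> [] \<Longrightarrow> hd xs \<noteq> last xs \<Longrightarrow> {hd xs, last xs} \<notin> E \<Longrightarrow> 3 \<le> length xs"
  by (cases xs rule: remdups_adj.cases) (auto simp: Suc_le_eq)

lemma induced_path_cong:
  "\<forall>x\<in>set xs. \<forall>y\<in>set xs. {x, y} \<in> E \<longleftrightarrow> {x, y} \<in> E' \<Longrightarrow>
     induced_path E xs \<longleftrightarrow> induced_path E' xs"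
  by (induction xs) auto

lemma walk_contains_induced_path:
  "walk E (x # xs) \<Longrightarrow> \<exists>ps. induced_path E (x # ps) \<and> last (x # ps) = last (x # xs) \<and> set ps \<subseteq> set xs"
proof (induction xs arbitrary: x)
  case Nil
  show ?case by (intro exI[of _ "[]"]) simp
next
  case (Cons y ys)
  have xy: "{x, y} \<in> E" and "walk E (y # ys)" using Cons.prems by simp_all
  then obtain qs where
    qs: "induced_path E (y # qs)" "last (y # qs) = last (y # ys)" "set qs \<subseteq> set ys"
    using Cons.IH by blast
  show ?case
  proof (cases "x \<in> set (y # qs)")
    case True
    then obtain q1 q2 where q: "y # qs = q1 @ x # q2" by (metis split_list)
    have "induced_path E (x # q2)" using qs(1) unfolding q induced_path_append by blast
    moreover have "last (x # q2) = last (x # y # ys)" using qs(2) unfolding q by simp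
    moreover have "set q2 \<subseteq> set (y # ys)" using qs(3) arg_cong[OF q, of set] by auto
    ultimately show ?thesis by blast
  next
    case False
    have "\<exists>v\<in>set (y # qs). {x, v} \<in> E" using xy by auto
    then obtain q1 v q2 where q: "y # qs = q1 @ v # q2" "{x, v} \<in> E" "\<forall>w\<in>set q2. {x, w} \<notin> E"
      by (rule split_list_last_propE)
    have "induced_path E (v # q2)" using qs(1) unfolding q(1) induced_path_append by blast
    moreover have "x \<notin> set (v # q2)" using False unfolding q(1) by simp
    ultimately have "induced_path E (x # v # q2)" using q(2,3) by auto
    moreover have "last (x # v # q2) = last (x # y # ys)" using qs(2) unfolding q(1) by simp
    moreover have "set (v # q2) \<subseteq> set (y # ys)" using qs(3) arg_cong[OF q(1), of set] by auto
    ultimately show ?thesis by blast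
  qed
qed

section \<open>Holes as induced paths closed by a vertex\<close>

definition induced_cycle :: "'a set set \<Rightarrow> 'a list \<Rightarrow> bool" where
  "induced_cycle E xs \<longleftrightarrow> distinct xs \<and> 4 \<le> length xs \<and>
     (\<forall>i<length xs. \<forall>j<length xs.
        {xs ! i, xs ! j} \<in> E \<longleftrightarrow> (j = Suc i mod length xs \<or> i = Suc j mod length xs))"

lemma is_hole_iff_induced_cycle: "is_hole V E C \<longleftrightarrow> C \<subseteq> V \<and> (\<exists>xs. induced_cycle E xs \<and> set xs = C)"
  unfolding is_hole_def induced_cycle_def by auto

lemma induced_cycle_cong:
  "\<forall>x\<in>set xs. \<forall>y\<in>set xs. {x, y} \<in> E \<longleftrightarrow> {x, y} \<in> E' \<Longrightarrow>
     induced_cycle E xs \<longleftrightarrow> induced_cycle E' xs"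
  unfolding induced_cycle_def by (metis nth_mem)

lemma induced_cycle_rotate1:
  assumes "induced_cycle E xs"
  shows "induced_cycle E (rotate1 xs)"
proof -
  define n where "n = length xs"
  have n4: "4 \<le> n" and adj: "\<forall>i<n. \<forall>j<n. {xs!i, xs!j} \<in> E \<longleftrightarrow> (j = Suc i mod n \<or> i = Suc j mod n)"
    using assms by (simp_all add: induced_cycle_def n_def)
  have suc: "Suc k mod n = (if Suc k = n then 0 else Suc k)" if "k < n" for k
    using that by auto
  show ?thesis
    unfolding induced_cycle_def length_rotate1 n_def[symmetric]
  proof (intro conjI allI impI)
    show "distinct (rotate1 xs)" using assms by (simp add: induced_cycle_def)
    show "4 \<le> n" by fact
  next
    fix i j assume i: "i < n" and j: "j < n"
    have "rotate1 xs ! i = xs ! (Suc i mod n)" "rotate1 xs ! j = xs ! (Suc j mod n)"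
      using i j by (simp_all add: nth_rotate1 n_def)
    moreover have "Suc i mod n < n" "Suc j mod n < n" using n4 by auto
    ultimately show "{rotate1 xs ! i, rotate1 xs ! j} \<in> E \<longleftrightarrow> (j = Suc i mod n \<or> i = Suc j mod n)"
      using adj i j n4 by (simp add: suc)
  qed
qed

lemma induced_cycle_rotate: "induced_cycle E xs \<Longrightarrow> induced_cycle E (rotate k xs)"
  by (induction k) (auto intro: induced_cycle_rotate1)

lemma distinct_nth_eq_hd_iff:
  assumes "distinct xs" "j < length xs"
  shows "xs ! j = hd xs \<longleftrightarrow> j = 0"
proof -
  have "xs \<noteq> []" using assms(2) by auto
  with assms show ?thesis by (simp add: hd_conv_nth nth_eq_iff_index_eq)
qed

lemma distinct_nth_eq_last_iff:
  assumes "distinct xs" "j < length xs"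
  shows "xs ! j = last xs \<longleftrightarrow> Suc j = length xs"
proof -
  have "xs \<noteq> []" using assms(2) by auto
  with assms show ?thesis by (auto simp: last_conv_nth nth_eq_iff_index_eq)
qed

lemma induced_path_conv_nth:
  assumes "\<forall>x\<in>set xs. {x, x} \<notin> E"
  shows "induced_path E xs \<longleftrightarrow> distinct xs \<and>
    (\<forall>i<length xs. \<forall>j<length xs. {xs ! i, xs ! j} \<in> E \<longleftrightarrow> j = Suc i \<or> i = Suc j)"
  using assms
proof (induction xs)
  case (Cons x xs)
  have "(\<forall>i<Suc (length xs). \<forall>j<Suc (length xs).
          {(x # xs) ! i, (x # xs) ! j} \<in> E \<longleftrightarrow> j = Suc i \<or> i = Suc j) \<longleftrightarrow>
        (\<forall>j<length xs. {x, xs ! j} \<in> E \<longleftrightarrow> j = 0) \<and>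
        (\<forall>i<length xs. \<forall>j<length xs. {xs ! i, xs ! j} \<in> E \<longleftrightarrow> j = Suc i \<or> i = Suc j)"
    using Cons.prems by (auto simp: All_less_Suc2 insert_commute)
  moreover have "(\<forall>y\<in>set xs. {x, y} \<in> E \<longleftrightarrow> y = hd xs) \<longleftrightarrow> (\<forall>j<length xs. {x, xs ! j} \<in> E \<longleftrightarrow> j = 0)"
    if "distinct xs"
    using that distinct_nth_eq_hd_iff[OF that] by (auto simp: all_set_conv_all_nth)
  ultimately show ?case using Cons by auto
qed simp

definition hole_path :: "'a set set \<Rightarrow> 'a \<Rightarrow> 'a list \<Rightarrow> bool" where
  "hole_path E u ps \<longleftrightarrow> induced_path E ps \<and> 3 \<le> length ps \<and> u \<notin> set ps \<and>
     (\<forall>y\<in>set ps. {u, y} \<in> E \<longleftrightarrow> y = hd ps \<or> y = last ps)"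

lemma hole_path_rev [simp]: "hole_path E u (rev ps) \<longleftrightarrow> hole_path E u ps"
  by (auto simp: hole_path_def hd_rev last_rev)

lemma induced_cycle_Cons_conv_nth:
  assumes loopless: "\<forall>x. {x, x} \<notin> E" and len: "3 \<le> length ps"
  shows "induced_cycle E (u # ps) \<longleftrightarrow> u \<notin> set ps \<and> distinct ps \<and>
    (\<forall>j<length ps. {u, ps ! j} \<in> E \<longleftrightarrow> j = 0 \<or> Suc j = length ps) \<and>
    (\<forall>i<length ps. \<forall>j<length ps. {ps ! i, ps ! j} \<in> E \<longleftrightarrow> j = Suc i \<or> i = Suc j)"
proof -
  define m where "m = length ps"
  define C where "C i j \<longleftrightarrow> ({(u # ps) ! i, (u # ps) ! j} \<in> E \<longleftrightarrow>
    j = Suc i mod Suc m \<or> i = Suc j mod Suc m)" for i j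
  have m: "3 \<le> m" using len by (simp add: m_def)
  have mod_Suc_Suc: "Suc (Suc k) mod Suc m = (if Suc k = m then 0 else Suc (Suc k))"
    if "k < m" for k
    using that by (simp add: mod_Suc)
  have "induced_cycle E (u # ps) \<longleftrightarrow> distinct (u # ps) \<and> (\<forall>i<Suc m. \<forall>j<Suc m. C i j)"
    using m by (simp add: induced_cycle_def C_def m_def)
  moreover have "C 0 0" using m loopless by (simp add: C_def)
  moreover have "C (Suc i) 0 \<longleftrightarrow> C 0 (Suc i)" for i
    by (simp add: C_def insert_commute disj_commute)
  moreover have "C 0 (Suc j) \<longleftrightarrow> ({u, ps ! j} \<in> E \<longleftrightarrow> j = 0 \<or> Suc j = m)" if "j < m" for j
    using that m by (auto simp: C_def mod_Suc_Suc)
  moreover have "C (Suc i) (Suc j) \<longleftrightarrow> ({ps ! i, ps ! j} \<in> E \<longleftrightarrow> j = Suc i \<or> i = Suc j)"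
    if "i < m" "j < m" for i j
    using that by (auto simp: C_def mod_Suc_Suc)
  ultimately show ?thesis unfolding All_less_Suc2 m_def[symmetric] by auto
qed

lemma hole_path_conv_nth:
  assumes loopless: "\<forall>x. {x, x} \<notin> E" and len: "3 \<le> length ps"
  shows "hole_path E u ps \<longleftrightarrow> u \<notin> set ps \<and> distinct ps \<and>
    (\<forall>j<length ps. {u, ps ! j} \<in> E \<longleftrightarrow> j = 0 \<or> Suc j = length ps) \<and>
    (\<forall>i<length ps. \<forall>j<length ps. {ps ! i, ps ! j} \<in> E \<longleftrightarrow> j = Suc i \<or> i = Suc j)"
proof -
  have ends: "(\<forall>y\<in>set ps. {u, y} \<in> E \<longleftrightarrow> y = hd ps \<or> y = last ps) \<longleftrightarrow>
      (\<forall>j<length ps. {u, ps ! j} \<in> E \<longleftrightarrow> j = 0 \<or> Suc j = length ps)" if "distinct ps"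
    using distinct_nth_eq_hd_iff[OF that] distinct_nth_eq_last_iff[OF that]
    by (simp add: all_set_conv_all_nth)
  show ?thesis
    using induced_path_conv_nth[of ps E] loopless ends len by (auto simp: hole_path_def)
qed

lemma induced_cycle_Cons_iff_hole_path:
  assumes loopless: "\<forall>x. {x, x} \<notin> E"
  shows "induced_cycle E (u # ps) \<longleftrightarrow> hole_path E u ps"
proof (cases "3 \<le> length ps")
  case True
  with loopless show ?thesis by (simp add: induced_cycle_Cons_conv_nth hole_path_conv_nth)
qed (simp add: induced_cycle_def hole_path_def)

lemma walk_contains_hole_path:
  assumes w: "walk E (x # ws)" and u: "u \<notin> set (x # ws)"
    and ends: "x \<noteq> last (x # ws)" "{x, last (x # ws)} \<notin> E"
    and adj: "\<forall>v\<in>set (x # ws). {u, v} \<in> E \<longleftrightarrow> v = x \<or> v = last (x # ws)"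
  shows "\<exists>ps. hole_path E u (x # ps) \<and> last (x # ps) = last (x # ws) \<and> set ps \<subseteq> set ws"
proof -
  obtain ps where ps: "induced_path E (x # ps)" "last (x # ps) = last (x # ws)" "set ps \<subseteq> set ws"
    using walk_contains_induced_path[OF w] by blast
  have "3 \<le> length (x # ps)" using induced_path_length[OF ps(1)] ps(2) ends by simp
  moreover have "set (x # ps) \<subseteq> set (x # ws)" using ps(3) by auto
  ultimately have "hole_path E u (x # ps)" using ps(1,2) u adj by (auto simp: hole_path_def)
  with ps(2,3) show ?thesis by blast
qed

lemma hole_path_vertices:
  assumes g: "graph V E" and hp: "hole_path E u ps"
  shows "u \<in> V" "set ps \<subseteq> V"
proof -
  have "walk E ps" "2 \<le> length ps" "ps \<noteq> []"
    using hp by (auto simp: hole_path_def induced_path_walk)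
  then show "set ps \<subseteq> V" using walk_in_vertices[OF g] by blast
  have "{u, hd ps} \<in> E" using hp \<open>ps \<noteq> []\<close> by (simp add: hole_path_def)
  then show "u \<in> V" using graph_edge_vertices[OF g] by blast
qed

lemma hole_path_in_holes_at:
  assumes g: "graph V E" and hp: "hole_path E u ps"
  shows "insert u (set ps) \<in> holes_at V E u"
proof -
  have "induced_cycle E (u # ps)"
    using induced_cycle_Cons_iff_hole_path[OF graph_loopless[OF g]] hp by simp
  then show ?thesis using hole_path_vertices[OF g hp]
    by (auto simp: holes_at_def holes_def is_hole_iff_induced_cycle intro!: exI[of _ "u # ps"])
qed

lemma holes_at_hole_pathE:
  assumes g: "graph V E" and H: "H \<in> holes_at V E u"
  obtains ps where "hole_path E u ps" "H = insert u (set ps)"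
proof -
  obtain xs where xs: "induced_cycle E xs" "set xs = H" "u \<in> H"
    using H by (auto simp: holes_at_def holes_def is_hole_iff_induced_cycle)
  then obtain p q where pq: "xs = p @ u # q" by (metis split_list)
  then have "rotate (length p) xs = u # (q @ p)" by (simp add: rotate_append)
  then have "induced_cycle E (u # (q @ p))"
    using induced_cycle_rotate[OF xs(1), of "length p"] by simp
  then have "hole_path E u (q @ p)"
    using induced_cycle_Cons_iff_hole_path[OF graph_loopless[OF g]] by simp
  moreover have "H = insert u (set (q @ p))" using xs(2) pq by auto
  ultimately show thesis by (rule that)
qed

section \<open>Local chordalization\<close>

definition hole_vertices :: "'a set \<Rightarrow> 'a set set \<Rightarrow> 'a \<Rightarrow> 'a set" where
  "hole_vertices V E u = {w. w \<noteq> u \<and> (\<exists>H\<in>holes_at V E u. w \<in> H)}"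

lemma hole_path_subset_hole_vertices:
  assumes g: "graph V E" and hp: "hole_path E u ps"
  shows "set ps \<subseteq> hole_vertices V E u"
proof
  fix x assume x: "x \<in> set ps"
  with hp have "x \<noteq> u" by (auto simp: hole_path_def)
  with x hole_path_in_holes_at[OF g hp] show "x \<in> hole_vertices V E u"
    by (auto simp: hole_vertices_def)
qed

lemma hole_vertexE:
  assumes g: "graph V E" and a: "a \<in> hole_vertices V E u" "{u, a} \<notin> E"
  obtains P S where "hole_path E u (P @ a # S)" "P \<noteq> []" "S \<noteq> []"
proof -
  obtain H where H: "H \<in> holes_at V E u" "a \<in> H" "a \<noteq> u"
    using a(1) by (auto simp: hole_vertices_def)
  obtain ps where "hole_path E u ps" "H = insert u (set ps)"
    using holes_at_hole_pathE[OF g H(1)] .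
  with H have ps: "hole_path E u ps" "a \<in> set ps" by auto
  then obtain P S where ps_eq: "ps = P @ a # S" by (metis split_list)
  have "a \<noteq> hd ps" "a \<noteq> last ps" using ps a(2) by (auto simp: hole_path_def)
  then have "P \<noteq> []" "S \<noteq> []" using ps_eq by auto
  with ps(1) ps_eq show thesis using that by blast
qed

lemma local_chordalize_eq: "local_chordalize V E u = E \<union> (\<lambda>w. {u, w}) ` hole_vertices V E u"
  unfolding local_chordalize_def hole_vertices_def by auto

lemma local_chordalize_edge_iff:
  "{x, y} \<in> local_chordalize V E u \<longleftrightarrow>
     {x, y} \<in> E \<or> (x = u \<and> y \<in> hole_vertices V E u) \<or> (y = u \<and> x \<in> hole_vertices V E u)"
  unfolding local_chordalize_eq by (auto simp: doubleton_eq_iff)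

lemma graph_local_chordalize:
  assumes g: "graph V E" and u: "u \<in> V"
  shows "graph V (local_chordalize V E u)"
proof -
  have "w \<in> V \<and> w \<noteq> u" if "w \<in> hole_vertices V E u" for w
    using that by (auto simp: hole_vertices_def holes_at_def holes_def is_hole_def)
  with g u show ?thesis unfolding graph_def local_chordalize_eq by blast
qed

text \<open>The detached vertices are those outside the closed neighbourhood of u in the chordalized
  graph; they make up the interior of every new hole through u.\<close>

definition detached :: "'a set \<Rightarrow> 'a set set \<Rightarrow> 'a \<Rightarrow> 'a \<Rightarrow> bool" where
  "detached V E u x \<longleftrightarrow> x \<noteq> u \<and> {u, x} \<notin> E \<and> x \<notin> hole_vertices V E u"

lemma detached_iff: "detached V E u x \<longleftrightarrow> x \<noteq> u \<and> {u, x} \<notin> local_chordalize V E u"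
  by (auto simp: detached_def local_chordalize_edge_iff)

section \<open>Walks attached to a hole through u\<close>

lemma hole_path_glue:
  assumes seg: "induced_path E (p # M @ [s])" and M: "M \<noteq> []"
    and Q: "induced_path E (p # Q)" "Q \<noteq> []" "last Q = s"
    and disj: "set M \<inter> set Q = {}"
    and anti: "\<forall>x\<in>set M. \<forall>y\<in>set Q. y \<noteq> s \<longrightarrow> {x, y} \<notin> E"
  shows "hole_path E p (M @ rev Q)"
proof -
  have hdM: "hd M \<in> set M" and lastQ: "s \<in> set Q" using M Q(2,3) by auto
  from seg M have ipM: "induced_path E M" and pM: "p \<notin> set M" "\<forall>y\<in>set M. {p, y} \<in> E \<longleftrightarrow> y = hd M"
    and sM: "s \<notin> set M" "\<forall>x\<in>set M. {x, s} \<in> E \<longleftrightarrow> x = last M" and ps: "{p, s} \<notin> E"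
    by (auto simp: induced_path_append)
  from Q(1) have ipQ: "induced_path E Q" and pQ: "p \<notin> set Q" "\<forall>y\<in>set Q. {p, y} \<in> E \<longleftrightarrow> y = hd Q"
    by simp_all
  have "hd Q \<noteq> last Q" using pQ(2) lastQ ps Q(3) by auto
  then have Q2: "2 \<le> length Q" using Q(2) by (cases Q) (auto simp: Suc_le_eq)
  have cross: "\<forall>x\<in>set M. \<forall>y\<in>set Q. {x, y} \<in> E \<longleftrightarrow> x = last M \<and> y = s"
  proof (intro ballI)
    fix x y assume "x \<in> set M" "y \<in> set Q"
    then show "{x, y} \<in> E \<longleftrightarrow> x = last M \<and> y = s" using anti sM(2) by (cases "y = s") auto
  qed
  have "induced_path E (M @ rev Q)"
    using ipM ipQ disj cross Q(3) by (simp add: induced_path_append hd_rev)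
  moreover have "3 \<le> length (M @ rev Q)" using M Q2 by (cases M) auto
  moreover have "{p, y} \<in> E \<longleftrightarrow> y = hd (M @ rev Q) \<or> y = last (M @ rev Q)"
    if "y \<in> set (M @ rev Q)" for y
    using that pM(2) pQ(2) disj hdM M Q(2) by (auto simp: last_rev)
  ultimately show ?thesis using pM(1) pQ(1) by (simp add: hole_path_def)
qed

lemma hole_bypassing_segmentE:
  assumes g: "graph V E"
    and seg: "induced_path E (p # M @ [s])" "M \<noteq> []"
    and ys: "walk E ys" "y \<in> set ys" "y' \<in> set ys" "{y, p} \<in> E" "{y', s} \<in> E"
    and disj: "set ys \<inter> set (p # M @ [s]) = {}"
    and anti: "anticomplete E (set M) (set ys)"
  obtains H where "H \<in> holes V E" "insert p (insert s (set M)) \<subseteq> H"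
    "H \<subseteq> insert p (insert s (set M \<union> set ys))"
proof -
  obtain w where w: "walk E w" "w \<noteq> []" "hd w = y" "last w = y'" "set w \<subseteq> set ys"
    using walk_between[OF ys(1-3)] by blast
  have "walk E (p # w @ [s])"
    using w ys(4,5) by (auto simp: successively_append_iff successively_Cons insert_commute)
  then obtain Q where Q: "induced_path E (p # Q)" "last (p # Q) = s" "set Q \<subseteq> set (w @ [s])"
    using walk_contains_induced_path by fastforce
  have "p \<noteq> s" using seg(1) by simp
  then have Qs: "Q \<noteq> []" "last Q = s" using Q(2) by auto
  have QV: "set Q \<subseteq> insert s (set ys)" using Q(3) w(5) by auto
  have sM: "s \<notin> set M" using seg(1) by (simp add: induced_path_append)
  have "hole_path E p (M @ rev Q)"
  proof (rule hole_path_glue[OF seg Q(1) Qs])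
    show "set M \<inter> set Q = {}" using QV disj sM by auto
    show "\<forall>x\<in>set M. \<forall>z\<in>set Q. z \<noteq> s \<longrightarrow> {x, z} \<notin> E"
      using QV anti by (auto simp: anticomplete_def)
  qed
  then have "insert p (set (M @ rev Q)) \<in> holes_at V E p" by (rule hole_path_in_holes_at[OF g])
  then have "insert p (set (M @ rev Q)) \<in> holes V E" by (simp add: holes_at_def)
  moreover have "s \<in> set Q" using Qs by auto
  ultimately show thesis using QV by (intro that) auto
qed

text \<open>If ys were attached on both sides of a, then its last attachment before a and its first one
  after a, joined through ys, would close a hole avoiding u that shares with the hole through u
  both of its edges at a.\<close>

lemma hole_path_attachments_one_sided:
  assumes g: "graph V E" and nc: "NC_property V E u"
    and hp: "hole_path E u (P @ a # S)" and P: "P \<noteq> []" and S: "S \<noteq> []"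
    and ys: "walk E ys" "set ys \<inter> set (P @ a # S) = {}" "u \<notin> set ys" "\<forall>y\<in>set ys. {y, a} \<notin> E"
  shows "anticomplete E (set ys) (set P) \<or> anticomplete E (set ys) (set S)"
proof (rule ccontr)
  define att where "att v \<longleftrightarrow> (\<exists>y\<in>set ys. {y, v} \<in> E)" for v
  assume "\<not> ?thesis"
  then have "\<exists>v\<in>set P. att v" "\<exists>v\<in>set S. att v" by (auto simp: anticomplete_def att_def)
  obtain P0 p P1 where P_eq: "P = P0 @ p # P1" "att p" "\<forall>v\<in>set P1. \<not> att v"
    using split_list_last_propE[OF \<open>\<exists>v\<in>set P. att v\<close>] by blast
  obtain S1 s S0 where S_eq: "S = S1 @ s # S0" "att s" "\<forall>v\<in>set S1. \<not> att v"
    using split_list_first_propE[OF \<open>\<exists>v\<in>set S. att v\<close>] by blast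
  obtain y y' where y: "y \<in> set ys" "y' \<in> set ys" "{y, p} \<in> E" "{y', s} \<in> E"
    using P_eq(2) S_eq(2) by (auto simp: att_def)
  define M where "M = P1 @ a # S1"
  have ip: "induced_path E (P @ a # S)" and u: "u \<notin> set (P @ a # S)"
    using hp by (simp_all add: hole_path_def)
  have hs: "P @ a # S = P0 @ (p # M @ [s]) @ S0" by (simp add: P_eq S_eq M_def)
  have seg: "induced_path E (p # M @ [s])" using ip unfolding hs induced_path_append by blast
  have anti: "anticomplete E (set M) (set ys)"
    using P_eq(3) S_eq(3) ys(4) by (auto simp: anticomplete_def att_def M_def insert_commute)
  have sub: "set (p # M @ [s]) \<subseteq> set (P @ a # S)" unfolding hs by auto
  have "M \<noteq> []" "set ys \<inter> set (p # M @ [s]) = {}" using sub ys(2) by (auto simp: M_def)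
  then obtain H' where H': "H' \<in> holes V E" "insert p (insert s (set M)) \<subseteq> H'"
    "H' \<subseteq> insert p (insert s (set M \<union> set ys))"
    using hole_bypassing_segmentE[OF g seg _ ys(1) y _ anti] by blast
  have "u \<notin> H'" using H'(3) sub u ys(3) by auto
  with H'(1) have H'_hole: "H' \<in> holes V E - holes_at V E u" by (simp add: holes_at_def)
  have H_hole: "insert u (set (P @ a # S)) \<in> holes_at V E u" using hole_path_in_holes_at[OF g hp] .
  have "walk E (P @ a # S)" using ip by (rule induced_path_walk)
  then have e: "{last P, a} \<in> E" "{a, hd S} \<in> E"
    using P S by (auto simp: successively_append_iff successively_Cons)
  have "last P \<in> H'" "a \<in> H'" "hd S \<in> H'" using H'(2) by (auto simp: P_eq S_eq M_def hd_append)
  with e P S have "{last P, a} \<in> hole_edges E H'" "{a, hd S} \<in> hole_edges E H'"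
    "{last P, a} \<in> hole_edges E (insert u (set (P @ a # S)))"
    "{a, hd S} \<in> hole_edges E (insert u (set (P @ a # S)))"
    by (auto simp: hole_edges_def)
  moreover have "last P \<noteq> hd S"
    using induced_path_distinct[OF ip] last_in_set[OF P] hd_in_set[OF S] by auto
  ultimately show False using nc H_hole H'_hole unfolding NC_property_def by blast
qed

text \<open>The shortcut of the walk is a hole path for u. Its first vertex outside R is adjacent to a
  vertex of R, hence not in T, hence detached; but it lies on a hole through u.\<close>

lemma no_detached_bypass:
  assumes g: "graph V E"
    and w: "walk E (R @ X @ T)" and R: "R \<noteq> []" and T: "T \<noteq> []"
    and disj: "set R \<inter> set T = {}" and anti: "anticomplete E (set R) (set T)"
    and u: "u \<notin> set R" "u \<notin> set T" "{u, hd R} \<in> E" "{u, last T} \<in> E"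
    and ends: "\<forall>v\<in>set R \<union> set T. {u, v} \<in> E \<longrightarrow> v = hd R \<or> v = last T"
    and X: "\<forall>x\<in>set X. detached V E u x"
  shows False
proof -
  obtain r R' where R_eq: "R = r # R'" using R by (cases R) auto
  have "r \<noteq> last T" "{r, last T} \<notin> E" using disj anti R_eq T by (auto simp: anticomplete_def)
  then obtain ps where
    ps: "hole_path E u (r # ps)" "last (r # ps) = last T" "set ps \<subseteq> set (R' @ X @ T)"
    using walk_contains_hole_path[of E r "R' @ X @ T" u] w R_eq T u ends X
    by (auto simp: detached_def)
  then have W: "set (r # ps) \<subseteq> hole_vertices V E u"
    using hole_path_subset_hole_vertices[OF g] by blast
  have "\<exists>v\<in>set (r # ps). v \<notin> set R"
    using ps(2) T disj by (metis disjoint_iff last_in_set list.discI)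
  then obtain q1 v q2 where q: "r # ps = q1 @ v # q2" "v \<notin> set R" "\<forall>x\<in>set q1. x \<in> set R"
    by (rule split_list_first_propE) blast
  have "q1 \<noteq> []" using q(1,2) R_eq by (cases q1) auto
  moreover have "walk E (r # ps)" using ps(1) by (simp add: hole_path_def induced_path_walk)
  then have "walk E (q1 @ v # q2)" using q(1) by simp
  ultimately have "{last q1, v} \<in> E" by (simp add: successively_append_iff)
  then have "v \<notin> set T" using anti q(3) \<open>q1 \<noteq> []\<close> by (auto simp: anticomplete_def)
  moreover have v: "v \<in> set (r # ps)" unfolding q(1) by simp
  then have "v \<in> set (R @ X @ T)" using ps(3) R_eq by auto
  ultimately have "v \<in> set X" using q(2) by auto
  moreover have "v \<in> hole_vertices V E u" using W v by auto
  ultimately show False using X by (auto simp: detached_def)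
qed

lemma hole_path_no_detached_bypass:
  assumes g: "graph V E" and hp: "hole_path E u (P @ a # S)" and S: "S \<noteq> []"
    and w: "walk E (a # X @ T)" and X: "\<forall>x\<in>set X. detached V E u x"
    and T: "T \<noteq> []" "u \<notin> set T" "{u, last T} \<in> E" "\<forall>v\<in>set T. {u, v} \<in> E \<longrightarrow> v = last T"
    and disj: "set (P @ [a]) \<inter> set T = {}" and anti: "anticomplete E (set (P @ [a])) (set T)"
  shows False
proof (rule no_detached_bypass[OF g _ _ T(1) disj anti _ T(2) _ T(3) _ X])
  have ip: "induced_path E (P @ a # S)" and u: "u \<notin> set (P @ a # S)"
    and ends: "\<forall>v\<in>set (P @ a # S). {u, v} \<in> E \<longleftrightarrow> v = hd (P @ a # S) \<or> v = last (P @ a # S)"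
    using hp by (simp_all add: hole_path_def)
  have "walk E ((P @ [a]) @ S)" using induced_path_walk[OF ip] by simp
  then have "walk E (P @ [a])" by (simp only: successively_append_iff)
  then show "walk E ((P @ [a]) @ X @ T)" using w by (simp add: successively_append_iff)
  show "P @ [a] \<noteq> []" "u \<notin> set (P @ [a])" using u by auto
  show "{u, hd (P @ [a])} \<in> E" using ends by (cases P) auto
  have "last S \<notin> set (P @ [a])" using induced_path_distinct[OF ip] last_in_set[OF S] by auto
  then show "\<forall>v\<in>set (P @ [a]) \<union> set T. {u, v} \<in> E \<longrightarrow> v = hd (P @ [a]) \<or> v = last T"
    using ends T(4) S by (cases P) auto
qed

lemma walk_into_far_side_anticomplete:
  assumes g: "graph V E" and nc: "NC_property V E u"
    and hp: "hole_path E u (P @ a # S)" and P: "P \<noteq> []" and S: "S \<noteq> []"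
    and w: "walk E (Y @ [z])" and z: "z \<in> set S"
    and Y: "\<forall>y\<in>set Y. y \<notin> set (P @ a # S) \<and> y \<noteq> u \<and> {a, y} \<notin> E"
  shows "anticomplete E (set P) (set Y)"
proof (cases "Y = []")
  case False
  have "anticomplete E (set Y) (set P) \<or> anticomplete E (set Y) (set S)"
  proof (rule hole_path_attachments_one_sided[OF g nc hp P S])
    show "walk E Y" using w by (simp add: successively_append_iff)
    show "set Y \<inter> set (P @ a # S) = {}" "u \<notin> set Y" "\<forall>y\<in>set Y. {y, a} \<notin> E"
      using Y by (auto simp: insert_commute)
  qed
  moreover have "{last Y, z} \<in> E" "last Y \<in> set Y"
    using w False by (simp_all add: successively_append_iff)
  ultimately show ?thesis using z unfolding anticomplete_commute[of E "set P"]
    by (auto simp: anticomplete_def)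
qed (simp add: anticomplete_def)

lemma no_detached_return_into_hole:
  assumes g: "graph V E" and nc: "NC_property V E u"
    and hp: "hole_path E u (P @ a # S)" and P: "P \<noteq> []" and S: "S \<noteq> []"
    and w: "walk E (a # X @ Y @ [z])" and X: "\<forall>x\<in>set X. detached V E u x"
    and Y: "\<forall>y\<in>set Y. y \<notin> set (P @ a # S) \<and> {u, y} \<notin> E \<and> y \<noteq> u"
    and a: "\<forall>y\<in>set (Y @ [z]). {a, y} \<notin> E"
    and z: "z \<in> set S"
  shows False
proof -
  obtain S1 S2 where S_eq: "S = S1 @ z # S2" using z by (metis split_list)
  have ip: "induced_path E (P @ a # S)" and u: "u \<notin> set (P @ a # S)"
    and ends: "\<forall>v\<in>set (P @ a # S). {u, v} \<in> E \<longleftrightarrow> v = hd (P @ a # S) \<or> v = last (P @ a # S)"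
    using hp by (simp_all add: hole_path_def)
  have walk_hs: "walk E ((P @ a # S1) @ (z # S2))" using induced_path_walk[OF ip] S_eq by simp
  have "S1 \<noteq> []"
  proof
    assume "S1 = []"
    then have "{a, z} \<in> E" using walk_hs by (simp add: successively_append_iff)
    then show False using a by simp
  qed
  have "walk E (Y @ [z])" using w successively_append_iff[of _ "a # X" "Y @ [z]"] by simp
  then have anti_Y: "anticomplete E (set P) (set Y)"
    using walk_into_far_side_anticomplete[OF g nc hp P S _ z] Y a by simp
  have anti_tail: "anticomplete E (set (P @ [a])) (set (z # S2))"
    using induced_path_anticomplete[of E "P @ [a]" S1 "z # S2"] ip \<open>S1 \<noteq> []\<close> S_eq by simp
  have tail: "set (z # S2) \<subseteq> set S" "last (z # S2) = last (P @ a # S)" using S_eq by auto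
  have PS: "set (P @ [a]) \<inter> set S = {}" using induced_path_distinct[OF ip] by auto
  show False
  proof (rule hole_path_no_detached_bypass[OF g hp S _ X])
    have "walk E (z # S2)" using walk_hs by (simp only: successively_append_iff)
    then show "walk E (a # X @ Y @ z # S2)" using walk_append_Cons[of E "a # X @ Y" z S2] w by simp
    show "u \<notin> set (Y @ z # S2)" "{u, last (Y @ z # S2)} \<in> E"
      using Y u tail ends by auto
    have "hd (P @ a # S) \<notin> set S" using hd_in_set[OF P] PS P by (simp add: disjoint_iff)
    then show "\<forall>v\<in>set (Y @ z # S2). {u, v} \<in> E \<longrightarrow> v = last (Y @ z # S2)"
      using ends Y tail by auto
    show "set (P @ [a]) \<inter> set (Y @ z # S2) = {}" using Y PS tail by auto
    show "anticomplete E (set (P @ [a])) (set (Y @ z # S2))"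
      using anti_Y a anti_tail by (auto simp: anticomplete_def)
  qed simp
qed

lemma no_detached_return_to_neighbour:
  assumes g: "graph V E" and hp: "hole_path E u (P @ a # S)" and S: "S \<noteq> []"
    and w: "walk E (a # X @ Y @ [z])" and X: "\<forall>x\<in>set X. detached V E u x"
    and Y: "\<forall>y\<in>set Y. y \<notin> set (P @ a # S) \<and> {u, y} \<notin> E \<and> y \<noteq> u"
    and a: "\<forall>y\<in>set (Y @ [z]). {a, y} \<notin> E"
    and z: "z \<notin> set (P @ a # S)" "{u, z} \<in> E" "z \<noteq> u"
    and anti: "anticomplete E (set (Y @ [z])) (set P)"
  shows False
proof (rule hole_path_no_detached_bypass[OF g hp S w X])
  show "Y @ [z] \<noteq> []" "u \<notin> set (Y @ [z])" "{u, last (Y @ [z])} \<in> E"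
    "\<forall>v\<in>set (Y @ [z]). {u, v} \<in> E \<longrightarrow> v = last (Y @ [z])"
    "set (P @ [a]) \<inter> set (Y @ [z]) = {}"
    using Y z by auto
  show "anticomplete E (set (P @ [a])) (set (Y @ [z]))"
    using anti a unfolding anticomplete_commute[of E "set (Y @ [z])"]
    by (auto simp: anticomplete_def)
qed

lemma no_detached_return:
  assumes g: "graph V E" and nc: "NC_property V E u"
    and hp: "hole_path E u (P @ a # S)" and P: "P \<noteq> []" and S: "S \<noteq> []"
    and w: "walk E (a # X @ Y @ [z])" and X: "\<forall>x\<in>set X. detached V E u x"
    and Y: "\<forall>y\<in>set Y. y \<notin> set (P @ a # S) \<and> {u, y} \<notin> E \<and> y \<noteq> u"
    and a: "\<forall>y\<in>set (Y @ [z]). {a, y} \<notin> E \<and> y \<noteq> a"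
    and z: "z \<in> set (P @ a # S) \<or> {u, z} \<in> E" "z \<noteq> u"
  shows False
proof -
  have hp': "hole_path E u (rev S @ a # rev P)" using hp hole_path_rev[of E u "P @ a # S"] by simp
  have Y': "\<forall>y\<in>set Y. y \<notin> set (rev S @ a # rev P) \<and> {u, y} \<notin> E \<and> y \<noteq> u" using Y by auto
  have a': "\<forall>y\<in>set (Y @ [z]). {a, y} \<notin> E" using a by blast
  consider "z \<in> set S" | "z \<in> set P" | "z \<notin> set (P @ a # S)" using a by auto
  then show False
  proof cases
    case 1
    then show False using no_detached_return_into_hole[OF g nc hp P S w X Y a'] by blast
  next
    case 2
    then show False using no_detached_return_into_hole[OF g nc hp' _ _ w X Y' a'] P S by simp
  next
    case 3
    have "walk E (Y @ [z])" using w successively_append_iff[of _ "a # X" "Y @ [z]"] by simp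
    then have "anticomplete E (set (Y @ [z])) (set P) \<or> anticomplete E (set (Y @ [z])) (set S)"
    proof (rule hole_path_attachments_one_sided[OF g nc hp P S])
      show "set (Y @ [z]) \<inter> set (P @ a # S) = {}" "u \<notin> set (Y @ [z])"
        "\<forall>y\<in>set (Y @ [z]). {y, a} \<notin> E"
        using Y a 3 z(2) by (auto simp: insert_commute)
    qed
    then show False
    proof
      assume "anticomplete E (set (Y @ [z])) (set P)"
      then show False using no_detached_return_to_neighbour[OF g hp S w X Y a' 3] z 3 by blast
    next
      assume "anticomplete E (set (Y @ [z])) (set S)"
      then show False using no_detached_return_to_neighbour[OF g hp' _ w X Y' a'] 3 z P by simp
    qed
  qed
qed

lemma hole_path_suffix_escape:
  assumes hp: "hole_path E u (P @ b # S)" and S: "S \<noteq> []"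
    and a: "a \<notin> set (P @ b # S)" "{a, b} \<notin> E" "anticomplete E {a} (set S)"
  shows "\<exists>rs. walk E (b # rs) \<and> {u, last (b # rs)} \<in> E \<and> u \<notin> set rs \<and>
    (\<forall>v\<in>set (b # rs). {a, v} \<notin> E \<and> v \<noteq> a)"
proof (intro exI[of _ S] conjI)
  have "walk E (P @ b # S)" using hp by (simp add: hole_path_def induced_path_walk)
  then show "walk E (b # S)" by (simp add: successively_append_iff)
  show "{u, last (b # S)} \<in> E" "u \<notin> set S" using hp S by (auto simp: hole_path_def)
  show "\<forall>v\<in>set (b # S). {a, v} \<notin> E \<and> v \<noteq> a" using a by (auto simp: anticomplete_def)
qed

text \<open>From b one reaches a neighbour of u while avoiding a and its neighbours: either b is such a
  neighbour, or it lies on a hole through u, of which one side is not seen by a.\<close>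

lemma detached_walk_escape:
  assumes g: "graph V E" and nc: "NC_property V E u"
    and b: "b \<in> hole_vertices V E u \<or> {u, b} \<in> E" "b \<noteq> u" and a: "a \<noteq> u"
    and ab: "{a, b} \<notin> E" "a \<noteq> b"
    and w: "walk E (a # X @ [b])" and X: "\<forall>x\<in>set X. detached V E u x"
  shows "\<exists>rs. walk E (b # rs) \<and> {u, last (b # rs)} \<in> E \<and> u \<notin> set rs \<and>
    (\<forall>v\<in>set (b # rs). {a, v} \<notin> E \<and> v \<noteq> a)"
proof (cases "{u, b} \<in> E")
  case True
  then show ?thesis using ab by (intro exI[of _ "[]"]) simp
next
  case False
  then obtain P S where hp: "hole_path E u (P @ b # S)" and P: "P \<noteq> []" and S: "S \<noteq> []"
    using hole_vertexE[OF g] b(1) by blast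
  have reversed: "walk E (b # rev X @ [] @ [a])" using w walk_rev[of E "a # X @ [b]"] by simp
  have a_off: "a \<notin> set (P @ b # S)"
  proof
    assume "a \<in> set (P @ b # S)"
    then show False
      using no_detached_return[OF g nc hp P S reversed _ _ _ _ a] X ab
      by (auto simp: insert_commute)
  qed
  have "walk E [a]" by simp
  then have "anticomplete E {a} (set P) \<or> anticomplete E {a} (set S)"
    using hole_path_attachments_one_sided[OF g nc hp P S, of "[a]"] a a_off ab
    by (auto simp: insert_commute)
  then show ?thesis
  proof
    assume "anticomplete E {a} (set S)"
    then show ?thesis by (rule hole_path_suffix_escape[OF hp S a_off ab(1)])
  next
    assume "anticomplete E {a} (set P)"
    moreover have "hole_path E u (rev S @ b # rev P)"
      using hp hole_path_rev[of E u "P @ b # S"] by simp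
    ultimately show ?thesis
      using hole_path_suffix_escape[of E u "rev S" b "rev P" a] a_off ab(1) P by simp
  qed
qed

lemma no_detached_connection:
  assumes g: "graph V E" and nc: "NC_property V E u"
    and a: "a \<in> hole_vertices V E u" "{u, a} \<notin> E"
    and b: "b \<in> hole_vertices V E u \<or> {u, b} \<in> E" "b \<noteq> u"
    and ab: "{a, b} \<notin> E" "a \<noteq> b"
    and w: "walk E (a # X @ [b])" and X: "\<forall>x\<in>set X. detached V E u x"
  shows False
proof -
  have "a \<noteq> u" using a(1) by (simp add: hole_vertices_def)
  obtain P S where hp: "hole_path E u (P @ a # S)" and P: "P \<noteq> []" and S: "S \<noteq> []"
    using hole_vertexE[OF g a] by blast
  obtain rs where rs: "walk E (b # rs)" "{u, last (b # rs)} \<in> E" "u \<notin> set rs"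
    "\<forall>v\<in>set (b # rs). {a, v} \<notin> E \<and> v \<noteq> a"
    using detached_walk_escape[OF g nc b \<open>a \<noteq> u\<close> ab w X] by blast
  have "\<exists>v\<in>set (b # rs). v \<in> set (P @ a # S) \<or> {u, v} \<in> E" using rs(2) last_in_set by blast
  then obtain Y z Z where split: "b # rs = Y @ z # Z" "z \<in> set (P @ a # S) \<or> {u, z} \<in> E"
    "\<forall>y\<in>set Y. \<not> (y \<in> set (P @ a # S) \<or> {u, y} \<in> E)"
    by (rule split_list_first_propE)
  have "walk E ((a # X) @ (b # rs))" using walk_append_Cons[of E "a # X" b rs] w rs(1) by simp
  then have "walk E ((a # X @ Y @ [z]) @ Z)" using split(1) by simp
  then have "walk E (a # X @ Y @ [z])" by (simp only: successively_append_iff)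
  moreover have "set (Y @ [z]) \<subseteq> set (b # rs)" using split(1) by auto
  ultimately show False
    using no_detached_return[OF g nc hp P S _ X, of Y z] split(2,3) rs(3,4) b(2) by auto
qed

lemma chordalized_hole_path_end_adjacent:
  assumes g: "graph V E" and nc: "NC_property V E u"
    and hp: "hole_path (local_chordalize V E u) u rs" and ip: "induced_path E rs"
  shows "{u, hd rs} \<in> E"
proof (rule ccontr)
  assume not_adj: "{u, hd rs} \<notin> E"
  have len: "3 \<le> length rs" using hp by (simp add: hole_path_def)
  obtain a rs' where rs1: "rs = a # rs'" using len by (cases rs) auto
  then obtain X b where "rs' = X @ [b]" using len by (cases rs' rule: rev_cases) auto
  with rs1 len have rs: "rs = a # X @ [b]" and "X \<noteq> []" by auto
  have dist: "distinct rs" using ip by (rule induced_path_distinct)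
  have ends: "\<forall>y\<in>set rs. {u, y} \<in> local_chordalize V E u \<longleftrightarrow> y = a \<or> y = b" and "u \<notin> set rs"
    using hp by (simp_all add: hole_path_def rs)
  have a_ne: "a \<noteq> b" and u_ne: "u \<noteq> a" "u \<noteq> b" using dist \<open>u \<notin> set rs\<close> by (auto simp: rs)
  show False
  proof (rule no_detached_connection[OF g nc])
    show "a \<in> hole_vertices V E u" "{u, a} \<notin> E" "b \<in> hole_vertices V E u \<or> {u, b} \<in> E"
      using ends not_adj u_ne by (auto simp: rs local_chordalize_edge_iff)
    show "{a, b} \<notin> E"
      using induced_path_anticomplete[of E "[a]" X "[b]"] ip \<open>X \<noteq> []\<close>
      by (simp add: rs anticomplete_def)
    show "\<forall>x\<in>set X. detached V E u x"
      using ends dist \<open>u \<notin> set rs\<close> by (auto simp: rs detached_iff)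
    show "walk E (a # X @ [b])" using induced_path_walk[OF ip] by (simp add: rs)
  qed (use a_ne u_ne in auto)
qed

lemma local_chordalize_hole_avoiding_vertex:
  assumes C: "C \<in> holes V (local_chordalize V E u)" and u: "u \<notin> C"
  shows "C \<in> holes V E"
proof -
  obtain xs where xs: "C \<subseteq> V" "induced_cycle (local_chordalize V E u) xs" "set xs = C"
    using C by (auto simp: holes_def is_hole_iff_induced_cycle)
  have agree: "\<forall>x\<in>set xs. \<forall>y\<in>set xs. {x, y} \<in> E \<longleftrightarrow> {x, y} \<in> local_chordalize V E u"
    using xs(3) u by (auto simp: local_chordalize_edge_iff)
  have "induced_cycle E xs" using induced_cycle_cong[OF agree] xs(2) by simp
  with xs show ?thesis by (auto simp: holes_def is_hole_iff_induced_cycle)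
qed

lemma local_chordalize_hole_through_vertex:
  assumes g: "graph V E" and nc: "NC_property V E u" and u: "u \<in> V"
    and C: "C \<in> holes_at V (local_chordalize V E u) u"
  shows "C \<in> holes_at V E u"
proof -
  obtain rs where hp: "hole_path (local_chordalize V E u) u rs" and C_eq: "C = insert u (set rs)"
    using holes_at_hole_pathE[OF graph_local_chordalize[OF g u] C] .
  have agree: "\<forall>x\<in>set rs. \<forall>y\<in>set rs. {x, y} \<in> E \<longleftrightarrow> {x, y} \<in> local_chordalize V E u"
    using hp by (auto simp: hole_path_def local_chordalize_edge_iff)
  have ip: "induced_path E rs" using induced_path_cong[OF agree] hp by (simp add: hole_path_def)
  have "{u, hd rs} \<in> E" "{u, hd (rev rs)} \<in> E"
    using chordalized_hole_path_end_adjacent[OF g nc] hp ip by simp_all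
  then have "hole_path E u rs"
    using hp ip by (auto simp: hole_path_def hd_rev local_chordalize_edge_iff)
  then show ?thesis using hole_path_in_holes_at[OF g] C_eq by simp
qed

theorem theorem2p3:
  fixes V :: "'a set" and E :: "'a set set" and u :: 'a
  assumes "graph V E" and "u \<in> V" and "NC_property V E u"
  shows "holes V (local_chordalize V E u) \<subseteq> holes V E"
proof
  fix C assume C: "C \<in> holes V (local_chordalize V E u)"
  show "C \<in> holes V E"
  proof (cases "u \<in> C")
    case True
    with C have "C \<in> holes_at V (local_chordalize V E u) u" by (simp add: holes_at_def)
    then have "C \<in> holes_at V E u" by (rule local_chordalize_hole_through_vertex[OF assms(1,3,2)])
    then show ?thesis by (simp add: holes_at_def)
  next
    case False
    with C show ?thesis by (rule local_chordalize_hole_avoiding_vertex)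
  qed
qed

end
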